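(* Let $C>0$, and let $Q_1,\dots,Q_m,\widehat Q_1,\dots,\widehat Q_m$ be probability distributions on $\mathbb{R}^d$ all supported in $\{x:\|x\|_2\le C\}$. Let $\pi,\widehat\pi$ be probability vectors on $[m]$ and set $Q=\sum_i\pi_iQ_i$, $\widehat Q=\sum_i\widehat\pi_i\widehat Q_i$. Suppose $\mathrm{TV}(\widehat\pi,\pi)\le\alpha$ and $\mathcal W_2(\widehat Q_i,Q_i)\le\epsilon$ for all $i\in[m]$. Then $$\mathcal W_2(\widehat Q,Q)\le\epsilon+2C\sqrt\alpha.$$
   Context: $\mathrm{TV}(\widehat\pi,\pi)=\frac12\sum_i|\widehat\pi_i-\pi_i|$; $\mathcal W_2$ is the Wasserstein-2 distance with Euclidean cost. *)

theory Defs
  imports "HOL-Probability.Probability"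
begin

definition coupling :: "'a::euclidean_space measure \<Rightarrow> 'a measure \<Rightarrow> ('a \<times> 'a) measure \<Rightarrow> bool" where
  "coupling \<mu> \<nu> \<gamma> \<longleftrightarrow>
     sets \<gamma> = sets (borel \<Otimes>\<^sub>M borel) \<and>
     distr \<gamma> borel fst = \<mu> \<and> distr \<gamma> borel snd = \<nu>"

definition W2sq :: "'a::euclidean_space measure \<Rightarrow> 'a measure \<Rightarrow> ennreal" where
  "W2sq \<mu> \<nu> = (INF \<gamma> \<in> {\<gamma>. coupling \<mu> \<nu> \<gamma>}. \<integral>\<^sup>+ z. ennreal ((dist (fst z) (snd z))\<^sup>2) \<partial>\<gamma>)"

text \<open>Wasserstein-2 distance (real-valued; meaningful when W2sq is finite, e.g. for
  compactly supported measures as in the statement).\<close>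
definition W2 :: "'a::euclidean_space measure \<Rightarrow> 'a measure \<Rightarrow> real" where
  "W2 \<mu> \<nu> = sqrt (enn2real (W2sq \<mu> \<nu>))"

definition TV :: "nat \<Rightarrow> (nat \<Rightarrow> real) \<Rightarrow> (nat \<Rightarrow> real) \<Rightarrow> real" where
  "TV m p q = (1/2) * (\<Sum>i<m. \<bar>p i - q i\<bar>)"

definition prob_vector :: "nat \<Rightarrow> (nat \<Rightarrow> real) \<Rightarrow> bool" where
  "prob_vector m p \<longleftrightarrow> (\<forall>i<m. 0 \<le> p i) \<and> (\<Sum>i<m. p i) = 1"

definition bounded_prob :: "real \<Rightarrow> 'a::euclidean_space measure \<Rightarrow> bool" where
  "bounded_prob C \<mu> \<longleftrightarrow> prob_space \<mu> \<and> sets \<mu> = sets borel \<and> (AE x in \<mu>. norm x \<le> C)"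

definition is_mixture :: "nat \<Rightarrow> (nat \<Rightarrow> real) \<Rightarrow> (nat \<Rightarrow> 'a::euclidean_space measure) \<Rightarrow> 'a measure \<Rightarrow> bool" where
  "is_mixture m p Q M \<longleftrightarrow> sets M = sets borel \<and>
     (\<forall>A \<in> sets borel. emeasure M A = (\<Sum>i<m. ennreal (p i) * emeasure (Q i) A))"

end

theory Submission
  imports Defs
begin

text \<open>Couple the weight vectors maximally: there is a coupling \<open>\<rho>\<close> of \<open>\<pi>h\<close> and \<open>\<pi>\<close> on
  \<open>[m] \<times> [m]\<close> whose diagonal carries mass at least \<open>1 - TV(\<pi>h, \<pi>)\<close>. Gluing the measures
  \<open>\<Gamma>\<^sub>i\<^sub>j\<close> with weights \<open>\<rho>\<^sub>i\<^sub>j\<close>, where \<open>\<Gamma>\<^sub>i\<^sub>i\<close> is a near-optimal coupling of \<open>Qh\<^sub>i\<close> and \<open>Q\<^sub>i\<close> and \<open>\<Gamma>\<^sub>i\<^sub>j\<close>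
  (\<open>i \<noteq> j\<close>) is the product of \<open>Qh\<^sub>i\<close> and \<open>Q\<^sub>j\<close>, gives a coupling of the two mixtures. Its
  squared cost is at most \<open>\<epsilon>\<^sup>2\<close> on the diagonal blocks and \<open>(2C)\<^sup>2\<close> off it, hence
  \<open>W\<^sub>2\<^sup>2 \<le> \<epsilon>\<^sup>2 + (2C)\<^sup>2 \<alpha> \<le> (\<epsilon> + 2C \<surd>\<alpha>)\<^sup>2\<close>.\<close>

text \<open>\<open>mixture I w N\<close> is \<open>\<Sum>k\<in>I. w k \<cdot> N k\<close>.\<close>

definition mixture :: "'i set \<Rightarrow> ('i \<Rightarrow> real) \<Rightarrow> ('i \<Rightarrow> 'a measure) \<Rightarrow> 'a measure" where
  "mixture I w N = density (count_space I) (\<lambda>k. ennreal (w k)) \<bind> N"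

lemma measurable_mixture_kernel:
  assumes "\<And>k. k \<in> I \<Longrightarrow> subprob_space (N k)" "\<And>k. k \<in> I \<Longrightarrow> sets (N k) = sets K"
  shows "N \<in> measurable (density (count_space I) w) (subprob_algebra K)"
  using assms by (auto simp: measurable_cong_sets[OF sets_density refl] space_subprob_algebra)

lemma sets_mixture:
  assumes "I \<noteq> {}" "\<And>k. k \<in> I \<Longrightarrow> sets (N k) = sets K"
  shows "sets (mixture I w N) = sets K"
  unfolding mixture_def using assms by (intro sets_bind) auto

lemma nn_integral_mixture:
  assumes "finite I"
    and "\<And>k. k \<in> I \<Longrightarrow> subprob_space (N k)" "\<And>k. k \<in> I \<Longrightarrow> sets (N k) = sets K"
    and "f \<in> borel_measurable K"
  shows "(\<integral>\<^sup>+x. f x \<partial>mixture I w N) = (\<Sum>k\<in>I. ennreal (w k) * (\<integral>\<^sup>+x. f x \<partial>N k))"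
  unfolding mixture_def
  using assms by (simp add: nn_integral_bind[OF _ measurable_mixture_kernel] nn_integral_density
      nn_integral_count_space_finite)

lemma emeasure_mixture:
  assumes "finite I" "I \<noteq> {}"
    and "\<And>k. k \<in> I \<Longrightarrow> subprob_space (N k)" "\<And>k. k \<in> I \<Longrightarrow> sets (N k) = sets K"
    and "A \<in> sets K"
  shows "emeasure (mixture I w N) A = (\<Sum>k\<in>I. ennreal (w k) * emeasure (N k) A)"
  using nn_integral_mixture[OF assms(1,3,4), where f="indicator A"] assms
  by (simp add: sets_mixture)

lemma distr_mixture:
  assumes "I \<noteq> {}"
    and "\<And>k. k \<in> I \<Longrightarrow> subprob_space (N k)" "\<And>k. k \<in> I \<Longrightarrow> sets (N k) = sets K"
    and "f \<in> measurable K R"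
  shows "distr (mixture I w N) R f = mixture I w (\<lambda>k. distr (N k) R f)"
  unfolding mixture_def using assms
  by (subst distr_bind[OF measurable_mixture_kernel]) auto

lemma mixture_cong: "(\<And>k. k \<in> I \<Longrightarrow> N k = N' k) \<Longrightarrow> mixture I w N = mixture I w N'"
  unfolding mixture_def by (rule bind_cong) simp_all

lemma mixture_reindex_is_mixture:
  assumes "is_mixture m p Q M"
    and "\<And>i. i < m \<Longrightarrow> subprob_space (Q i)" "\<And>i. i < m \<Longrightarrow> sets (Q i) = sets borel"
    and "finite I" "I \<noteq> {}" "g ` I \<subseteq> {..<m}" "\<And>k. k \<in> I \<Longrightarrow> 0 \<le> w k"
    and "\<And>i. i < m \<Longrightarrow> p i = (\<Sum>k | k \<in> I \<and> g k = i. w k)"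
  shows "mixture I w (\<lambda>k. Q (g k)) = M"
proof (rule measure_eqI)
  have Q_g: "subprob_space (Q (g k))" "sets (Q (g k)) = sets borel" if "k \<in> I" for k
    using assms(2,3,6) that by auto
  show "sets (mixture I w (\<lambda>k. Q (g k))) = sets M"
    using assms(1) Q_g(2) by (simp add: sets_mixture[OF assms(5)] is_mixture_def)
  fix A assume "A \<in> sets (mixture I w (\<lambda>k. Q (g k)))"
  then have A: "A \<in> sets borel"
    using Q_g(2) by (simp add: sets_mixture[OF assms(5)])
  have "emeasure (mixture I w (\<lambda>k. Q (g k))) A = (\<Sum>k\<in>I. ennreal (w k) * emeasure (Q (g k)) A)"
    using Q_g A by (intro emeasure_mixture[OF assms(4,5)])
  also have "\<dots> = (\<Sum>i<m. \<Sum>k | k \<in> I \<and> g k = i. ennreal (w k) * emeasure (Q (g k)) A)"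
    using assms(4,6) by (intro sum.group[symmetric]) simp_all
  also have "\<dots> = (\<Sum>i<m. ennreal (p i) * emeasure (Q i) A)"
  proof (intro sum.cong refl)
    fix i assume "i \<in> {..<m}"
    then have "(\<Sum>k | k \<in> I \<and> g k = i. ennreal (w k)) = ennreal (p i)"
      using assms(7,8) by (subst sum_ennreal) auto
    then show "(\<Sum>k | k \<in> I \<and> g k = i. ennreal (w k) * emeasure (Q (g k)) A) = ennreal (p i) * emeasure (Q i) A"
      by (simp add: sum_distrib_right[symmetric])
  qed
  also have "\<dots> = emeasure M A"
    using assms(1) A by (simp add: is_mixture_def)
  finally show "emeasure (mixture I w (\<lambda>k. Q (g k))) A = emeasure M A" .
qed

lemma measurable_coupling:
  assumes "coupling \<mu> \<nu> \<gamma>"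
  shows "fst \<in> measurable \<gamma> borel" "snd \<in> measurable \<gamma> borel"
proof -
  have sets_\<gamma>: "sets \<gamma> = sets (borel \<Otimes>\<^sub>M borel)"
    using assms by (simp add: coupling_def)
  show "fst \<in> measurable \<gamma> borel" "snd \<in> measurable \<gamma> borel"
    unfolding measurable_cong_sets[OF sets_\<gamma> refl] by simp_all
qed

lemma prob_space_coupling:
  assumes "coupling \<mu> \<nu> \<gamma>" "prob_space \<mu>"
  shows "prob_space \<gamma>"
proof -
  have "distr \<gamma> borel fst = \<mu>"
    using assms(1) by (simp add: coupling_def)
  then have "prob_space (distr \<gamma> borel fst)"
    using assms(2) by simp
  then show ?thesis
    by (rule prob_space_distrD[OF measurable_coupling(1)[OF assms(1)]])
qed

lemma coupling_pair_measure:
  assumes "prob_space \<mu>" "prob_space \<nu>" "sets \<mu> = sets borel" "sets \<nu> = sets borel"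
  shows "coupling \<mu> \<nu> (\<mu> \<Otimes>\<^sub>M \<nu>)"
proof -
  interpret pair_prob_space \<mu> \<nu>
    using assms(1,2) by (simp add: pair_prob_space_def pair_sigma_finite_def prob_space_imp_sigma_finite)
  have sets_pair: "sets (\<mu> \<Otimes>\<^sub>M \<nu>) = sets (borel \<Otimes>\<^sub>M borel)"
    using assms(3,4) by (rule sets_pair_measure_cong)
  have "distr (\<mu> \<Otimes>\<^sub>M \<nu>) borel fst = distr (\<mu> \<Otimes>\<^sub>M \<nu>) \<mu> fst"
    using assms(3) by (intro distr_cong) simp_all
  then have "distr (\<mu> \<Otimes>\<^sub>M \<nu>) borel fst = \<mu>"
    by (simp add: M2.distr_pair_fst)
  moreover have "distr (\<mu> \<Otimes>\<^sub>M \<nu>) borel snd = \<nu>"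
  proof (rule measure_eqI)
    fix A assume "A \<in> sets (distr (\<mu> \<Otimes>\<^sub>M \<nu>) borel snd)"
    then have A: "A \<in> sets borel" "A \<in> sets \<nu>"
      using assms(4) by simp_all
    have "snd \<in> measurable (\<mu> \<Otimes>\<^sub>M \<nu>) borel"
      unfolding measurable_cong_sets[OF sets_pair refl] by (rule measurable_snd)
    then have "emeasure (distr (\<mu> \<Otimes>\<^sub>M \<nu>) borel snd) A = emeasure (\<mu> \<Otimes>\<^sub>M \<nu>) (snd -` A \<inter> space (\<mu> \<Otimes>\<^sub>M \<nu>))"
      using A(1) by (rule emeasure_distr)
    also have "snd -` A \<inter> space (\<mu> \<Otimes>\<^sub>M \<nu>) = space \<mu> \<times> A"
      using sets.sets_into_space[OF A(2)] by (auto simp: space_pair_measure)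
    also have "emeasure (\<mu> \<Otimes>\<^sub>M \<nu>) (space \<mu> \<times> A) = emeasure \<nu> A"
      using M2.emeasure_pair_measure_Times[OF sets.top[of \<mu>] A(2)] by (simp add: M1.emeasure_space_1)
    finally show "emeasure (distr (\<mu> \<Otimes>\<^sub>M \<nu>) borel snd) A = emeasure \<nu> A" .
  qed (use assms(4) in simp)
  ultimately show ?thesis
    unfolding coupling_def using sets_pair by (intro conjI)
qed

lemma coupling_mixture:
  assumes "I \<noteq> {}" "\<And>k. k \<in> I \<Longrightarrow> coupling (\<mu> k) (\<nu> k) (\<gamma> k)" "\<And>k. k \<in> I \<Longrightarrow> subprob_space (\<gamma> k)"
  shows "coupling (mixture I w \<mu>) (mixture I w \<nu>) (mixture I w \<gamma>)"
proof -
  have sets_\<gamma>: "sets (\<gamma> k) = sets (borel \<Otimes>\<^sub>M borel)" if "k \<in> I" for k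
    using assms(2)[OF that] by (simp add: coupling_def)
  have "distr (mixture I w \<gamma>) borel fst = mixture I w (\<lambda>k. distr (\<gamma> k) borel fst)"
    "distr (mixture I w \<gamma>) borel snd = mixture I w (\<lambda>k. distr (\<gamma> k) borel snd)"
    using assms(1,3) sets_\<gamma> by (auto intro!: distr_mixture[where K="borel \<Otimes>\<^sub>M borel"])
  moreover have "mixture I w (\<lambda>k. distr (\<gamma> k) borel fst) = mixture I w \<mu>"
    "mixture I w (\<lambda>k. distr (\<gamma> k) borel snd) = mixture I w \<nu>"
    using assms(2) by (auto simp: coupling_def intro!: mixture_cong)
  ultimately show ?thesis
    unfolding coupling_def using sets_mixture[OF assms(1) sets_\<gamma>] by simp
qed

lemma nn_integral_dist_sq_coupling_le:
  assumes "bounded_prob C \<mu>" "bounded_prob C \<nu>" "coupling \<mu> \<nu> \<gamma>"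
  shows "(\<integral>\<^sup>+z. ennreal ((dist (fst z) (snd z))\<^sup>2) \<partial>\<gamma>) \<le> ennreal ((2 * C)\<^sup>2)"
proof -
  interpret prob_space \<gamma>
    using assms by (auto simp: bounded_prob_def intro: prob_space_coupling)
  have "AE x in distr \<gamma> borel fst. norm x \<le> C" "AE y in distr \<gamma> borel snd. norm y \<le> C"
    using assms by (auto simp: bounded_prob_def coupling_def)
  then have "AE z in \<gamma>. norm (fst z) \<le> C \<and> norm (snd z) \<le> C"
    using assms(3) by (simp add: AE_distr_iff measurable_coupling)
  then have "AE z in \<gamma>. ennreal ((dist (fst z) (snd z))\<^sup>2) \<le> ennreal ((2 * C)\<^sup>2)"
  proof eventually_elim
    case (elim z)
    have "dist (fst z) (snd z) \<le> norm (fst z) + norm (snd z)"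
      by (simp add: dist_norm norm_triangle_ineq4)
    also have "\<dots> \<le> 2 * C"
      using elim by simp
    finally show ?case
      by (intro ennreal_leI power_mono) auto
  qed
  then have "(\<integral>\<^sup>+z. ennreal ((dist (fst z) (snd z))\<^sup>2) \<partial>\<gamma>) \<le> (\<integral>\<^sup>+z. ennreal ((2 * C)\<^sup>2) \<partial>\<gamma>)"
    by (rule nn_integral_mono_AE)
  then show ?thesis
    by (simp add: emeasure_space_1)
qed

lemma W2_nonneg: "0 \<le> W2 \<mu> \<nu>"
  by (simp add: W2_def)

lemma W2sq_le_coupling_cost:
  "coupling \<mu> \<nu> \<gamma> \<Longrightarrow> W2sq \<mu> \<nu> \<le> (\<integral>\<^sup>+z. ennreal ((dist (fst z) (snd z))\<^sup>2) \<partial>\<gamma>)"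
  unfolding W2sq_def by (rule INF_lower) simp

lemma W2sq_bounded_prob_le:
  assumes "bounded_prob C \<mu>" "bounded_prob C \<nu>"
  shows "W2sq \<mu> \<nu> \<le> ennreal ((2 * C)\<^sup>2)"
proof -
  have "coupling \<mu> \<nu> (\<mu> \<Otimes>\<^sub>M \<nu>)"
    using assms by (intro coupling_pair_measure) (simp_all add: bounded_prob_def)
  then show ?thesis
    using assms by (meson W2sq_le_coupling_cost nn_integral_dist_sq_coupling_le order_trans)
qed

lemma W2sq_le_of_W2_le:
  assumes "bounded_prob C \<mu>" "bounded_prob C \<nu>" "W2 \<mu> \<nu> \<le> \<epsilon>"
  shows "W2sq \<mu> \<nu> \<le> ennreal (\<epsilon>\<^sup>2)"
proof -
  have "W2sq \<mu> \<nu> < \<top>"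
    using W2sq_bounded_prob_le[OF assms(1,2)] by (meson ennreal_less_top le_less_trans)
  then have "W2sq \<mu> \<nu> = ennreal ((W2 \<mu> \<nu>)\<^sup>2)"
    by (simp add: W2_def)
  also have "\<dots> \<le> ennreal (\<epsilon>\<^sup>2)"
    using assms(3) W2_nonneg by (intro ennreal_leI power_mono)
  finally show ?thesis .
qed

lemma W2_le_sqrt: "W2sq \<mu> \<nu> \<le> ennreal x \<Longrightarrow> 0 \<le> x \<Longrightarrow> W2 \<mu> \<nu> \<le> sqrt x"
  unfolding W2_def by (intro real_sqrt_le_mono enn2real_leI)

lemma TV_nonneg: "0 \<le> TV m p q"
  unfolding TV_def by (simp add: sum_nonneg)

lemma TV_eq_sum_excess:
  assumes "prob_vector m p" "prob_vector m q"
  shows "TV m p q = (\<Sum>i<m. p i - min (p i) (q i))" "TV m p q = (\<Sum>i<m. q i - min (p i) (q i))"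
proof -
  have excess_eq: "(\<Sum>i<m. p i - min (p i) (q i)) = (\<Sum>i<m. q i - min (p i) (q i))"
    using assms by (simp add: sum_subtractf prob_vector_def)
  have "(\<Sum>i<m. \<bar>p i - q i\<bar>) = (\<Sum>i<m. (p i - min (p i) (q i)) + (q i - min (p i) (q i)))"
    by (intro sum.cong) auto
  then have "(\<Sum>i<m. \<bar>p i - q i\<bar>) = (\<Sum>i<m. p i - min (p i) (q i)) + (\<Sum>i<m. q i - min (p i) (q i))"
    by (simp only: sum.distrib)
  then show "TV m p q = (\<Sum>i<m. p i - min (p i) (q i))" "TV m p q = (\<Sum>i<m. q i - min (p i) (q i))"
    using excess_eq unfolding TV_def by (linarith, linarith)
qed

lemma prob_vector_maximal_coupling:
  assumes "prob_vector m p" "prob_vector m q"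
  obtains \<rho> :: "nat \<times> nat \<Rightarrow> real"
  where "\<And>i j. i < m \<Longrightarrow> j < m \<Longrightarrow> 0 \<le> \<rho> (i, j)"
    and "\<And>i. i < m \<Longrightarrow> (\<Sum>j<m. \<rho> (i, j)) = p i"
    and "\<And>j. j < m \<Longrightarrow> (\<Sum>i<m. \<rho> (i, j)) = q j"
    and "1 - TV m p q \<le> (\<Sum>i<m. \<rho> (i, i))"
proof -
  define \<beta> where "\<beta> i = min (p i) (q i)" for i
  define a where "a i = p i - \<beta> i" for i
  define b where "b i = q i - \<beta> i" for i
  define T where "T = (\<Sum>i<m. a i)"
  have nonneg: "0 \<le> \<beta> i" "0 \<le> a i" "0 \<le> b i" if "i < m" for i
    using assms that by (auto simp: prob_vector_def \<beta>_def a_def b_def)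
  have "0 \<le> T"
    unfolding T_def using nonneg by (intro sum_nonneg) simp
  have TV_eq: "TV m p q = T" and sum_b_eq: "(\<Sum>i<m. b i) = T"
    using TV_eq_sum_excess[OF assms] by (simp_all add: T_def a_def b_def \<beta>_def)
  have sum_\<beta>: "(\<Sum>i<m. \<beta> i) = 1 - T"
    using assms(1) by (simp add: T_def a_def sum_subtractf prob_vector_def)
  have vanish: "a i = 0" "b i = 0" if "T = 0" "i < m" for i
    using that nonneg sum_nonneg_eq_0_iff[of "{..<m}" a] sum_nonneg_eq_0_iff[of "{..<m}" b]
    by (auto simp: T_def sum_b_eq)
  \<comment> \<open>The common mass \<open>\<beta>\<close> stays on the diagonal, the excesses \<open>a\<close> and \<open>b\<close> are coupled
    independently. If \<open>T = 0\<close> both excesses vanish, so the junk value \<open>x / 0 = 0\<close> is harmless.\<close>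
  define \<rho> where "\<rho> = (\<lambda>(i, j). (if i = j then \<beta> i else 0) + a i * b j / T)"
  show thesis
  proof
    show "0 \<le> \<rho> (i, j)" if "i < m" "j < m" for i j
      using nonneg that \<open>0 \<le> T\<close> by (simp add: \<rho>_def)
    show "(\<Sum>j<m. \<rho> (i, j)) = p i" if "i < m" for i
    proof -
      have "(\<Sum>j<m. \<rho> (i, j)) = \<beta> i + a i * (T / T)"
        using that by (simp add: \<rho>_def sum.distrib sum_divide_distrib[symmetric]
            sum_distrib_left[symmetric] sum_b_eq)
      then show ?thesis
        using vanish(1)[OF _ that] by (cases "T = 0") (simp_all add: a_def)
    qed
    show "(\<Sum>i<m. \<rho> (i, j)) = q j" if "j < m" for j
    proof -
      have "(\<Sum>i<m. \<rho> (i, j)) = \<beta> j + b j * (T / T)"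
        using that by (simp add: \<rho>_def sum.distrib sum_divide_distrib[symmetric]
            sum_distrib_right[symmetric] T_def[symmetric] mult.commute)
      then show ?thesis
        using vanish(2)[OF _ that] by (cases "T = 0") (simp_all add: b_def)
    qed
    have "(\<Sum>i<m. \<beta> i) \<le> (\<Sum>i<m. \<rho> (i, i))"
      using nonneg \<open>0 \<le> T\<close> by (auto simp: \<rho>_def intro!: sum_mono)
    then show "1 - TV m p q \<le> (\<Sum>i<m. \<rho> (i, i))"
      using TV_eq sum_\<beta> by simp
  qed
qed

lemma sum_coupling_cost_diagonal_le:
  fixes \<rho> :: "nat \<times> nat \<Rightarrow> real"
  assumes "prob_vector m p" "\<And>i j. i < m \<Longrightarrow> j < m \<Longrightarrow> 0 \<le> \<rho> (i, j)"
    and "\<And>i. i < m \<Longrightarrow> (\<Sum>j<m. \<rho> (i, j)) = p i" "1 - t \<le> (\<Sum>i<m. \<rho> (i, i))"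
    and "0 \<le> e" "0 \<le> D"
  shows "(\<Sum>k\<in>{..<m} \<times> {..<m}. \<rho> k * (if fst k = snd k then e else D)) \<le> e + D * t"
proof -
  define d where "d = (\<Sum>i<m. \<rho> (i, i))"
  have row: "(\<Sum>j<m. \<rho> (i, j) * (if i = j then e else D)) = D * p i + (e - D) * \<rho> (i, i)"
    if "i < m" for i
  proof -
    have "(\<Sum>j<m. \<rho> (i, j) * (if i = j then e else D))
        = (\<Sum>j<m. D * \<rho> (i, j) + (if i = j then (e - D) * \<rho> (i, j) else 0))"
      by (intro sum.cong) (auto simp: algebra_simps)
    then show ?thesis
      using that assms(3) by (simp add: sum.distrib sum_distrib_left[symmetric])
  qed
  have "\<rho> (i, i) \<le> p i" if "i < m" for i
    using that assms(2) member_le_sum[of i "{..<m}" "\<lambda>j. \<rho> (i, j)"] by (simp add: assms(3))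
  then have "d \<le> (\<Sum>i<m. p i)"
    unfolding d_def by (intro sum_mono) simp
  then have "d \<le> 1"
    using assms(1) by (simp add: prob_vector_def)
  have "(\<Sum>k\<in>{..<m} \<times> {..<m}. \<rho> k * (if fst k = snd k then e else D))
      = (\<Sum>i<m. \<Sum>j<m. \<rho> (i, j) * (if i = j then e else D))"
    by (simp add: sum.cartesian_product split_def)
  also have "\<dots> = (\<Sum>i<m. D * p i + (e - D) * \<rho> (i, i))"
    using row by simp
  also have "\<dots> = D + (e - D) * d"
    using assms(1) by (simp add: sum.distrib sum_distrib_left[symmetric] prob_vector_def d_def)
  also have "\<dots> = e * d + D * (1 - d)"
    by (simp add: algebra_simps)
  also have "\<dots> \<le> e + D * t"
    using \<open>d \<le> 1\<close> assms(4-6) by (intro add_mono mult_left_mono) (auto simp: d_def intro: mult_left_le)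
  finally show ?thesis .
qed

lemma coupling_glued_mixture:
  fixes Q Qh :: "nat \<Rightarrow> 'a::euclidean_space measure" and G :: "nat \<times> nat \<Rightarrow> ('a \<times> 'a) measure"
  assumes "0 < m"
    and Q: "\<And>i. i < m \<Longrightarrow> prob_space (Q i)" "\<And>i. i < m \<Longrightarrow> sets (Q i) = sets borel"
    and Qh: "\<And>i. i < m \<Longrightarrow> prob_space (Qh i)" "\<And>i. i < m \<Longrightarrow> sets (Qh i) = sets borel"
    and mix: "is_mixture m \<pi> Q QM" and mixh: "is_mixture m \<pi>h Qh QhM"
    and \<rho>_nonneg: "\<And>i j. i < m \<Longrightarrow> j < m \<Longrightarrow> 0 \<le> \<rho> (i, j)"
    and rows: "\<And>i. i < m \<Longrightarrow> (\<Sum>j<m. \<rho> (i, j)) = \<pi>h i"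
    and cols: "\<And>j. j < m \<Longrightarrow> (\<Sum>i<m. \<rho> (i, j)) = \<pi> j"
    and G: "\<And>i j. i < m \<Longrightarrow> j < m \<Longrightarrow> coupling (Qh i) (Q j) (G (i, j))"
  shows "coupling QhM QM (mixture ({..<m} \<times> {..<m}) \<rho> G)"
proof -
  define I where "I = {..<m} \<times> {..<m}"
  have I: "finite I" "I \<noteq> {}"
    using \<open>0 < m\<close> by (auto simp: I_def)
  have "subprob_space (G (i, j))" if "i < m" "j < m" for i j
    using prob_space_coupling[OF G[OF that] Qh(1)[OF that(1)]] by (rule prob_space_imp_subprob_space)
  then have "coupling (mixture I \<rho> (\<lambda>k. Qh (fst k))) (mixture I \<rho> (\<lambda>k. Q (snd k))) (mixture I \<rho> G)"
    using I(2) G by (intro coupling_mixture) (auto simp: I_def)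
  moreover have "mixture I \<rho> (\<lambda>k. Qh (fst k)) = QhM"
  proof (rule mixture_reindex_is_mixture[OF mixh])
    show "\<pi>h i = (\<Sum>k | k \<in> I \<and> fst k = i. \<rho> k)" if "i < m" for i
    proof -
      have "{k. k \<in> I \<and> fst k = i} = Pair i ` {..<m}"
        using that by (auto simp: I_def)
      then show ?thesis
        using rows[OF that] by (simp add: sum.reindex inj_on_def)
    qed
  qed (use I Qh \<rho>_nonneg in \<open>auto simp: I_def prob_space_imp_subprob_space\<close>)
  moreover have "mixture I \<rho> (\<lambda>k. Q (snd k)) = QM"
  proof (rule mixture_reindex_is_mixture[OF mix])
    show "\<pi> j = (\<Sum>k | k \<in> I \<and> snd k = j. \<rho> k)" if "j < m" for j
    proof -
      have "{k. k \<in> I \<and> snd k = j} = (\<lambda>i. (i, j)) ` {..<m}"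
        using that by (auto simp: I_def)
      then show ?thesis
        using cols[OF that] by (simp add: sum.reindex inj_on_def)
    qed
  qed (use I Q \<rho>_nonneg in \<open>auto simp: I_def prob_space_imp_subprob_space\<close>)
  ultimately show ?thesis
    by (simp add: I_def)
qed

lemma W2sq_mixture_le_couplings:
  fixes Q Qh :: "nat \<Rightarrow> 'a::euclidean_space measure" and \<gamma> :: "nat \<Rightarrow> ('a \<times> 'a) measure"
  assumes bQ: "\<And>i. i < m \<Longrightarrow> bounded_prob C (Q i)" and bQh: "\<And>i. i < m \<Longrightarrow> bounded_prob C (Qh i)"
    and pv: "prob_vector m \<pi>" and pvh: "prob_vector m \<pi>h"
    and mix: "is_mixture m \<pi> Q QM" and mixh: "is_mixture m \<pi>h Qh QhM"
    and \<gamma>: "\<And>i. i < m \<Longrightarrow> coupling (Qh i) (Q i) (\<gamma> i)"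
    and cost_\<gamma>: "\<And>i. i < m \<Longrightarrow> (\<integral>\<^sup>+z. ennreal ((dist (fst z) (snd z))\<^sup>2) \<partial>\<gamma> i) \<le> ennreal e"
    and "0 \<le> e"
  shows "W2sq QhM QM \<le> ennreal (e + (2 * C)\<^sup>2 * TV m \<pi>h \<pi>)"
proof -
  obtain \<rho> where \<rho>_nonneg: "\<And>i j. i < m \<Longrightarrow> j < m \<Longrightarrow> 0 \<le> \<rho> (i, j)"
    and rows: "\<And>i. i < m \<Longrightarrow> (\<Sum>j<m. \<rho> (i, j)) = \<pi>h i"
    and cols: "\<And>j. j < m \<Longrightarrow> (\<Sum>i<m. \<rho> (i, j)) = \<pi> j"
    and diag: "1 - TV m \<pi>h \<pi> \<le> (\<Sum>i<m. \<rho> (i, i))"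
    using prob_vector_maximal_coupling[OF pvh pv] by blast
  define G where "G = (\<lambda>(i, j). if i = j then \<gamma> i else Qh i \<Otimes>\<^sub>M Q j)"
  define c :: "nat \<times> nat \<Rightarrow> real" where "c = (\<lambda>(i, j). if i = j then e else (2 * C)\<^sup>2)"
  define I where "I = {..<m} \<times> {..<m}"
  have G: "coupling (Qh i) (Q j) (G (i, j))" "prob_space (G (i, j))"
    and block_cost: "(\<integral>\<^sup>+z. ennreal ((dist (fst z) (snd z))\<^sup>2) \<partial>G (i, j)) \<le> ennreal (c (i, j))"
    if "i < m" "j < m" for i j
  proof -
    show G_ij: "coupling (Qh i) (Q j) (G (i, j))"
      using that \<gamma> bQ bQh by (auto simp: G_def bounded_prob_def intro!: coupling_pair_measure)
    then show "prob_space (G (i, j))"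
      using that bQh by (auto simp: bounded_prob_def intro: prob_space_coupling)
    show "(\<integral>\<^sup>+z. ennreal ((dist (fst z) (snd z))\<^sup>2) \<partial>G (i, j)) \<le> ennreal (c (i, j))"
    proof (cases "i = j")
      case True
      then show ?thesis
        using cost_\<gamma>[OF that(1)] by (simp add: G_def c_def)
    next
      case False
      then show ?thesis
        using nn_integral_dist_sq_coupling_le[OF bQh[OF that(1)] bQ[OF that(2)] G_ij] by (simp add: c_def)
    qed
  qed
  have "m > 0"
    using pv by (cases m) (auto simp: prob_vector_def)
  with bQ bQh have "coupling QhM QM (mixture I \<rho> G)"
    unfolding I_def by (intro coupling_glued_mixture[OF _ _ _ _ _ mix mixh \<rho>_nonneg rows cols G(1)])
      (auto simp: bounded_prob_def)
  then have "W2sq QhM QM \<le> (\<integral>\<^sup>+z. ennreal ((dist (fst z) (snd z))\<^sup>2) \<partial>mixture I \<rho> G)"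
    by (rule W2sq_le_coupling_cost)
  also have "\<dots> = (\<Sum>k\<in>I. ennreal (\<rho> k) * (\<integral>\<^sup>+z. ennreal ((dist (fst z) (snd z))\<^sup>2) \<partial>G k))"
    using G(1,2) by (intro nn_integral_mixture[where K="borel \<Otimes>\<^sub>M borel"])
      (auto simp: I_def coupling_def prob_space_imp_subprob_space)
  also have "\<dots> \<le> (\<Sum>k\<in>I. ennreal (\<rho> k * c k))"
  proof (intro sum_mono)
    fix k assume "k \<in> I"
    then obtain i j where k: "k = (i, j)" "i < m" "j < m"
      by (auto simp: I_def)
    have "0 \<le> c k"
      using \<open>0 \<le> e\<close> by (simp add: c_def k)
    with block_cost[OF k(2,3)] \<rho>_nonneg[OF k(2,3)]
    show "ennreal (\<rho> k) * (\<integral>\<^sup>+z. ennreal ((dist (fst z) (snd z))\<^sup>2) \<partial>G k) \<le> ennreal (\<rho> k * c k)"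
      by (simp add: k ennreal_mult mult_left_mono)
  qed
  also have "\<dots> = ennreal (\<Sum>k\<in>I. \<rho> k * c k)"
    using \<rho>_nonneg \<open>0 \<le> e\<close> by (intro sum_ennreal) (auto simp: I_def c_def)
  also have "\<dots> \<le> ennreal (e + (2 * C)\<^sup>2 * TV m \<pi>h \<pi>)"
    using sum_coupling_cost_diagonal_le[OF pvh \<rho>_nonneg rows diag \<open>0 \<le> e\<close>, of "(2 * C)\<^sup>2"]
    by (intro ennreal_leI) (simp add: I_def c_def split_def)
  finally show ?thesis .
qed

lemma W2sq_mixture_le:
  fixes Q Qh :: "nat \<Rightarrow> 'a::euclidean_space measure"
  assumes "\<And>i. i < m \<Longrightarrow> bounded_prob C (Q i)" "\<And>i. i < m \<Longrightarrow> bounded_prob C (Qh i)"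
    and "prob_vector m \<pi>" "prob_vector m \<pi>h"
    and "is_mixture m \<pi> Q QM" "is_mixture m \<pi>h Qh QhM"
    and W2sq_le: "\<And>i. i < m \<Longrightarrow> W2sq (Qh i) (Q i) \<le> ennreal e" and "0 \<le> e"
  shows "W2sq QhM QM \<le> ennreal (e + (2 * C)\<^sup>2 * TV m \<pi>h \<pi>)"
proof (rule ennreal_le_epsilon)
  fix \<delta> :: real assume "0 < \<delta>"
  have "\<forall>i\<in>{..<m}. \<exists>\<gamma>. coupling (Qh i) (Q i) \<gamma> \<and>
      (\<integral>\<^sup>+z. ennreal ((dist (fst z) (snd z))\<^sup>2) \<partial>\<gamma>) < ennreal (e + \<delta>)"
  proof
    fix i assume "i \<in> {..<m}"
    have "ennreal e < ennreal (e + \<delta>)"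
      using \<open>0 < \<delta>\<close> \<open>0 \<le> e\<close> by (intro ennreal_lessI) simp_all
    with W2sq_le have "W2sq (Qh i) (Q i) < ennreal (e + \<delta>)"
      using \<open>i \<in> {..<m}\<close> by (blast intro: le_less_trans)
    then show "\<exists>\<gamma>. coupling (Qh i) (Q i) \<gamma> \<and>
        (\<integral>\<^sup>+z. ennreal ((dist (fst z) (snd z))\<^sup>2) \<partial>\<gamma>) < ennreal (e + \<delta>)"
      unfolding W2sq_def INF_less_iff by auto
  qed
  then obtain \<gamma> where "\<forall>i\<in>{..<m}. coupling (Qh i) (Q i) (\<gamma> i) \<and>
      (\<integral>\<^sup>+z. ennreal ((dist (fst z) (snd z))\<^sup>2) \<partial>\<gamma> i) < ennreal (e + \<delta>)"
    by metis
  then have "W2sq QhM QM \<le> ennreal ((e + \<delta>) + (2 * C)\<^sup>2 * TV m \<pi>h \<pi>)"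
    using \<open>0 < \<delta>\<close> \<open>0 \<le> e\<close>
    by (intro W2sq_mixture_le_couplings[OF assms(1-6)]) (auto intro: less_imp_le)
  also have "\<dots> = ennreal (e + (2 * C)\<^sup>2 * TV m \<pi>h \<pi>) + ennreal \<delta>"
    using \<open>0 < \<delta>\<close> \<open>0 \<le> e\<close> TV_nonneg[of m \<pi>h \<pi>] by (simp flip: ennreal_plus add: algebra_simps)
  finally show "W2sq QhM QM \<le> ennreal (e + (2 * C)\<^sup>2 * TV m \<pi>h \<pi>) + ennreal \<delta>" .
qed

theorem lemmaB5:
  fixes C \<alpha> \<epsilon> :: real and m :: nat
    and Q Qh :: "nat \<Rightarrow> 'a::euclidean_space measure"
    and \<pi> \<pi>h :: "nat \<Rightarrow> real"
    and QM QhM :: "'a measure"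
  assumes "C > 0"
    and "\<And>i. i < m \<Longrightarrow> bounded_prob C (Q i)"
    and "\<And>i. i < m \<Longrightarrow> bounded_prob C (Qh i)"
    and "prob_vector m \<pi>" and "prob_vector m \<pi>h"
    and "is_mixture m \<pi> Q QM" and "is_mixture m \<pi>h Qh QhM"
    and "TV m \<pi>h \<pi> \<le> \<alpha>"
    and "\<And>i. i < m \<Longrightarrow> W2 (Qh i) (Q i) \<le> \<epsilon>"
  shows "W2 QhM QM \<le> \<epsilon> + 2 * C * sqrt \<alpha>"
proof -
  have "0 < m"
    using assms(4) by (cases m) (auto simp: prob_vector_def)
  have "0 \<le> \<epsilon>"
    using W2_nonneg assms(9)[OF \<open>0 < m\<close>] by (rule order_trans)
  have "0 \<le> \<alpha>"
    using TV_nonneg assms(8) by (rule order_trans)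
  have "W2sq QhM QM \<le> ennreal (\<epsilon>\<^sup>2 + (2 * C)\<^sup>2 * TV m \<pi>h \<pi>)"
    using assms(2,3,9) by (intro W2sq_mixture_le[OF assms(2-7)] W2sq_le_of_W2_le) simp_all
  also have "\<dots> \<le> ennreal (\<epsilon>\<^sup>2 + (2 * C)\<^sup>2 * \<alpha>)"
    using assms(8) by (intro ennreal_leI add_left_mono mult_left_mono) simp_all
  finally have "W2 QhM QM \<le> sqrt (\<epsilon>\<^sup>2 + (2 * C)\<^sup>2 * \<alpha>)"
    using \<open>0 \<le> \<alpha>\<close> by (intro W2_le_sqrt) simp_all
  also have "\<dots> \<le> sqrt (\<epsilon>\<^sup>2) + sqrt ((2 * C)\<^sup>2 * \<alpha>)"
    using \<open>0 \<le> \<alpha>\<close> by (intro sqrt_add_le_add_sqrt) simp_all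
  also have "\<dots> = \<epsilon> + 2 * C * sqrt \<alpha>"
    using \<open>0 \<le> \<epsilon>\<close> assms(1) by (simp add: real_sqrt_mult)
  finally show ?thesis .
qed

end
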